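(* Consider the controlled impulsive system $\dot x(t)=Ax(t)+B_cu_c(t)$ for $t\ne t_k$, $x(t_k^+)=Jx(t_k)+B_du_d(t_k)$, with $A,J\in\mathbb{R}^{n\times n}$, $B_c\in\mathbb{R}^{n\times m_c}$, $B_d\in\mathbb{R}^{n\times m_d}$, and let $\bar T>0$. Assume there exist a continuously differentiable diagonal-matrix-valued function $X:[0,\bar T]\to\mathbb{D}^n$ with $X(\tau)$ nonsingular for all $\tau$ and $X(0)\in\mathbb{D}^n_{\succ0}$, a continuous $U:[0,\bar T]\to\mathbb{R}^{m_c\times n}$, a matrix $U_d\in\mathbb{R}^{m_d\times n}$ and scalars $\varepsilon,\alpha>0$ such that, for all $\tau\in[0,\bar T]$, $AX(\tau)+B_cU(\tau)+\alpha I_n\ge0$, $JX(\bar T)+B_dU_d\ge0$, $\big[-\dot X(\tau)+AX(\tau)+B_cU(\tau)\big]\mathbf{1}_n<0$ and $\big[JX(\bar T)+B_dU_d-X(0)+\varepsilon I_n\big]\mathbf{1}_n\le0$. Define $K_c(\tau)=U(\tau)X(\tau)^{-1}$ and $K_d=U_dX(\bar T)^{-1}$ and the controller $u_c(t_k+\tau)=K_c(\tau)x(t_k+\tau)$ for $\tau\in(0,\bar T]$, $u_d(t_k)=K_dx(t_k)$. Then $A+B_cK_c(\tau)$ is Metzler for all $\tau\in[0,\bar T]$, $J+B_dK_d$ is nonnegative, $\big[(J+B_dK_d)\Psi(\bar T)-I_n\big]X(0)\mathbf{1}_n<0$ where $\frac{d}{ds}\Psi(s)=(A+B_cK_c(s))\Psi(s)$,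 $\Psi(0)=I_n$, and the closed-loop system is positive and asymptotically stable under constant dwell-time $\bar T$.
   Context: $\mathbb{D}^n$ is the set of $n\times n$ diagonal matrices and $\mathbb{D}^n_{\succ0}$ those with positive diagonal entries. Matrix/vector inequalities are entrywise; $\mathbf{1}_n$ is the vector of ones. $x(t^+)=\lim_{s\downarrow t}x(s)$. A matrix is Metzler if its off-diagonal entries are nonnegative. Constant dwell-time $\bar T$ means $t_{k+1}-t_k=\bar T$ for all $k$; asymptotic stability means global asymptotic stability of the zero solution. *)

theory Defs
  imports "HOL-Analysis.Analysis"
begin

definition ones :: "real ^ 'n" where
  "ones = (\<chi> i. 1)"

definition diag_mat :: "real ^ 'n ^ 'n \<Rightarrow> bool" where
  "diag_mat M \<longleftrightarrow> (\<forall>i j. i \<noteq> j \<longrightarrow> M $ i $ j = 0)"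

definition pos_diag_mat :: "real ^ 'n ^ 'n \<Rightarrow> bool" where
  "pos_diag_mat M \<longleftrightarrow> diag_mat M \<and> (\<forall>i. M $ i $ i > 0)"

definition metzler :: "real ^ 'n ^ 'n \<Rightarrow> bool" where
  "metzler M \<longleftrightarrow> (\<forall>i j. i \<noteq> j \<longrightarrow> M $ i $ j \<ge> 0)"

definition nonneg_mat :: "real ^ 'c ^ 'r \<Rightarrow> bool" where
  "nonneg_mat M \<longleftrightarrow> (\<forall>i j. M $ i $ j \<ge> 0)"

definition nonneg_vec :: "real ^ 'n \<Rightarrow> bool" where
  "nonneg_vec v \<longleftrightarrow> (\<forall>i. v $ i \<ge> 0)"

text \<open>Solutions of the closed-loop impulsive system
  xdot(t) = A x(t) + Bc uc(t) for t \<noteq> t_k,  x(t_k^+) = J x(t_k) + Bd ud(t_k),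
  with constant dwell time T, impulse instants t_k = k T (k \<ge> 1), initial time t_0 = 0,
  and controller uc(t_k + \<tau>) = Kc(\<tau>) x(t_k + \<tau>) for \<tau> \<in> (0,T], ud(t_k) = Kd x(t_k).
  Trajectories are left-continuous on (t_k, t_{k+1}]; x(t_k) is the pre-jump value.\<close>
definition closed_loop_sol ::
  "real ^ 'n ^ 'n \<Rightarrow> real ^ 'mc ^ 'n \<Rightarrow> real ^ 'n ^ 'n \<Rightarrow> real ^ 'md ^ 'n \<Rightarrow>
   (real \<Rightarrow> real ^ 'n ^ 'mc) \<Rightarrow> real ^ 'n ^ 'md \<Rightarrow> real \<Rightarrow> (real \<Rightarrow> real ^ 'n) \<Rightarrow> bool" where
  "closed_loop_sol A Bc J Bd Kc Kd T x \<longleftrightarrow>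
     (\<forall>k::nat.
        continuous_on {real k * T <.. real (Suc k) * T} x \<and>
        (\<forall>s. real k * T < s \<and> s < real (Suc k) * T \<longrightarrow>
              (x has_vector_derivative (A *v x s + Bc *v (Kc (s - real k * T) *v x s))) (at s)) \<and>
        (x \<longlongrightarrow> (if k = 0 then x 0
                    else J *v x (real k * T) + Bd *v (Kd *v x (real k * T))))
          (at_right (real k * T)))"

definition closed_loop_positive where
  "closed_loop_positive A Bc J Bd Kc Kd T \<longleftrightarrow>
     (\<forall>x. closed_loop_sol A Bc J Bd Kc Kd T x \<and> nonneg_vec (x 0) \<longrightarrow>
          (\<forall>t\<ge>0. nonneg_vec (x t)))"

definition closed_loop_GAS where
  "closed_loop_GAS A Bc J Bd Kc Kd T \<longleftrightarrow>
     (\<forall>e>0. \<exists>d>0. \<forall>x. closed_loop_sol A Bc J Bd Kc Kd T x \<and> norm (x 0) < d \<longrightarrow>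
          (\<forall>t\<ge>0. norm (x t) < e)) \<and>
     (\<forall>x. closed_loop_sol A Bc J Bd Kc Kd T x \<longrightarrow> (x \<longlongrightarrow> 0) at_top)"

end

theory Submission
  imports Defs
begin

text \<open>
  Put \<open>v(\<tau>) = X(\<tau>) 1\<close>. Condition C3 says \<open>v' > (A + Bc Kc) v\<close> on a dwell interval, and C4 says
  that the jump matrix \<open>J + Bd Kd\<close> maps \<open>v(T)\<close> below \<open>v(0) - \<epsilon> 1\<close>, hence below \<open>\<rho> v(0)\<close> for
  some \<open>\<rho> < 1\<close>. As \<open>A + Bc Kc\<close> is Metzler, a flow starting in the set \<open>x \<ge> -c v\<close> cannot leave
  it: at the first time a component reaches the boundary its derivative would point inwards.
  As \<open>J + Bd Kd\<close> is nonnegative, the jump turns \<open>x \<ge> -c v(T)\<close> into \<open>x \<ge> -\<rho> c v(0)\<close>.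
  Applied to \<open>x\<close> and \<open>-x\<close> this gives \<open>|x(kT + \<tau>)| \<le> \<rho>\<^sup>k c v(\<tau>)\<close>, hence positivity
  (take \<open>c = 0\<close>), stability and convergence; applied to the fundamental matrix it gives
  \<open>\<Psi>(T) v(0) \<le> v(T)\<close> and with it the monodromy condition.
\<close>

lemma has_vector_derivative_vec_nth:
  fixes y :: "real \<Rightarrow> real ^ 'n"
  assumes "(y has_vector_derivative y') F"
  shows "((\<lambda>s. y s $ i) has_real_derivative y' $ i) F"
  using bounded_linear.has_vector_derivative[OF bounded_linear_vec_nth assms]
  by (simp add: has_real_derivative_iff_has_vector_derivative)

lemma bounded_linear_matrix_vector_mult_left: "bounded_linear (\<lambda>A::real^'n^'m. A *v w)"
  by (auto intro!: linearI simp: linear_conv_bounded_linear[symmetric] vec_eq_iff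
      matrix_vector_mult_def sum.distrib distrib_right sum_distrib_left mult.assoc)

lemma has_vector_derivative_matrix_vector_mult_left:
  fixes X :: "real \<Rightarrow> real^'n^'m"
  assumes "(X has_vector_derivative X') F"
  shows "((\<lambda>t. X t *v w) has_vector_derivative X' *v w) F"
  using bounded_linear.has_vector_derivative[OF bounded_linear_matrix_vector_mult_left assms] .

lemma metzler_matrix_vector_nonneg_at_zero:
  assumes "metzler M" "\<And>j. w $ j \<ge> 0" "w $ i = 0"
  shows "(M *v w) $ i \<ge> 0"
  unfolding matrix_vector_mult_def vec_lambda_beta
proof (rule sum_nonneg)
  show "M $ i $ j * w $ j \<ge> 0" for j
    using assms by (cases "j = i") (auto simp: metzler_def)
qed

lemma nonneg_mat_vector_mult_mono:
  fixes G :: "real^'n^'m"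
  assumes "nonneg_mat G" "\<And>j. x $ j \<le> w $ j"
  shows "(G *v x) $ i \<le> (G *v w) $ i"
  unfolding matrix_vector_mult_def using assms
  by (simp add: sum_mono mult_left_mono nonneg_mat_def)

lemma first_nonpositive_time:
  fixes w :: "real \<Rightarrow> real ^ 'n"
  assumes "a \<le> s" and w_cont: "continuous_on {a..s} w"
    and pos: "\<And>j. w a $ j > 0" and "w s $ i \<le> 0"
  obtains t0 j where "t0 \<in> {a<..s}" "w t0 $ j \<le> 0" "\<And>t k. a \<le> t \<Longrightarrow> t < t0 \<Longrightarrow> w t $ k > 0"
proof -
  define Z where "Z = (\<Union>j. {t \<in> {a..s}. w t $ j \<le> 0})"
  define t0 where "t0 = Inf Z"
  have "closed {t \<in> {a..s}. w t $ j \<le> 0}" for j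
    by (intro continuous_on_closed_Collect_le continuous_intros w_cont)
  hence "closed Z" by (auto simp: Z_def intro: closed_Union)
  moreover have "s \<in> Z" "bdd_below Z"
    using \<open>a \<le> s\<close> \<open>w s $ i \<le> 0\<close> by (auto simp: Z_def bdd_below_def)
  ultimately have "t0 \<in> Z" unfolding t0_def by (blast intro: closed_contains_Inf)
  then obtain j where t0: "t0 \<in> {a..s}" "w t0 $ j \<le> 0" by (auto simp: Z_def)
  have "t0 \<noteq> a" using t0 pos[of j] by auto
  have below: "w t $ k > 0" if "a \<le> t" "t < t0" for t k
  proof (rule ccontr)
    assume "\<not> w t $ k > 0"
    hence "t \<in> Z" using that t0 by (auto simp: Z_def not_less)
    hence "t0 \<le> t" unfolding t0_def using \<open>bdd_below Z\<close> by (rule cInf_lower)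
    thus False using that by simp
  qed
  show ?thesis by (rule that[of t0 j]) (use t0 \<open>t0 \<noteq> a\<close> below in auto)
qed

lemma metzler_strict_positivity:
  fixes w w' :: "real \<Rightarrow> real ^ 'n" and M :: "real \<Rightarrow> real ^ 'n ^ 'n"
  assumes w_cont: "continuous_on {a..b} w"
    and w_deriv: "\<And>s. s \<in> {a<..<b} \<Longrightarrow> (w has_vector_derivative w' s) (at s)"
    and metzler: "\<And>s. s \<in> {a<..<b} \<Longrightarrow> metzler (M s)"
    and growth: "\<And>s i. s \<in> {a<..<b} \<Longrightarrow> (M s *v w s) $ i < w' s $ i"
    and pos: "\<And>i. w a $ i > 0"
    and s: "s \<in> {a..<b}"
  shows "w s $ i > 0"
proof (rule ccontr)
  assume "\<not> w s $ i > 0"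
  obtain t0 j where t0: "t0 \<in> {a<..s}" "w t0 $ j \<le> 0"
    and before: "\<And>t k. a \<le> t \<Longrightarrow> t < t0 \<Longrightarrow> w t $ k > 0"
  proof (rule first_nonpositive_time[OF _ continuous_on_subset[OF w_cont] pos])
    show "a \<le> s" "{a..s} \<subseteq> {a..b}" "w s $ i \<le> 0" using s \<open>\<not> w s $ i > 0\<close> by auto
  qed blast
  hence t0_in: "t0 \<in> {a<..<b}" using s by auto
  have deriv: "((\<lambda>t. w t $ k) has_real_derivative w' t0 $ k) (at t0)" for k
    by (rule has_vector_derivative_vec_nth[OF w_deriv[OF t0_in]])
  have nonneg: "w t0 $ k \<ge> 0" for k
  proof (rule tendsto_lowerbound)
    show "((\<lambda>t. w t $ k) \<longlongrightarrow> w t0 $ k) (at_left t0)"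
      using DERIV_isCont[OF deriv] by (simp add: isCont_def filterlim_at_split)
    show "\<forall>\<^sub>F t in at_left t0. 0 \<le> w t $ k"
      using eventually_at_left_real[of a t0] t0_in
      by (auto elim!: eventually_mono intro: less_imp_le before)
  qed simp
  with t0 have "w t0 $ j = 0" by (simp add: order_antisym)
  with nonneg have "(M t0 *v w t0) $ j \<ge> 0"
    using metzler[OF t0_in] by (intro metzler_matrix_vector_nonneg_at_zero)
  hence "w' t0 $ j > 0" using growth[OF t0_in, of j] by linarith
  from DERIV_pos_inc_left[OF deriv this] obtain d where
    "d > 0" "\<And>h. h > 0 \<Longrightarrow> h < d \<Longrightarrow> w (t0 - h) $ j < w t0 $ j" by blast
  moreover define h where "h = min (d / 2) ((t0 - a) / 2)"
  ultimately have "w (t0 - h) $ j < 0" using t0_in \<open>w t0 $ j = 0\<close> by (auto simp: h_def)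
  moreover have "w (t0 - h) $ j > 0"
    using \<open>d > 0\<close> t0_in by (intro before) (auto simp: h_def min_def field_simps)
  ultimately show False by simp
qed

lemma metzler_comparison:
  fixes y v v' :: "real \<Rightarrow> real ^ 'n" and M :: "real \<Rightarrow> real ^ 'n ^ 'n"
  assumes "a < b"
    and y_cont: "continuous_on {a..b} y" and v_cont: "continuous_on {a..b} v"
    and y_deriv: "\<And>s. s \<in> {a<..<b} \<Longrightarrow> (y has_vector_derivative M s *v y s) (at s)"
    and v_deriv: "\<And>s. s \<in> {a<..<b} \<Longrightarrow> (v has_vector_derivative v' s) (at s)"
    and metzler: "\<And>s. s \<in> {a<..<b} \<Longrightarrow> metzler (M s)"
    and v_growth: "\<And>s i. s \<in> {a<..<b} \<Longrightarrow> (M s *v v s) $ i < v' s $ i"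
    and v_pos: "\<And>i. v a $ i > 0"
    and "\<delta> \<ge> 0" and y_ge: "\<And>i. y a $ i \<ge> - \<delta> * v a $ i"
    and s: "s \<in> {a..b}"
  shows "y s $ i \<ge> - \<delta> * v s $ i"
proof -
  have strict: "y s $ i + e * v s $ i > 0" if "e > \<delta>" "s \<in> {a..<b}" for e s
  proof -
    have "(y s + e *\<^sub>R v s) $ i > 0"
    proof (rule metzler_strict_positivity[OF _ _ metzler])
      show "continuous_on {a..b} (\<lambda>s. y s + e *\<^sub>R v s)"
        by (intro continuous_intros y_cont v_cont)
      show "((\<lambda>s. y s + e *\<^sub>R v s) has_vector_derivative M s *v y s + e *\<^sub>R v' s) (at s)"
        if "s \<in> {a<..<b}" for s
        using that by (auto intro!: derivative_eq_intros y_deriv v_deriv)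
      show "(M s *v (y s + e *\<^sub>R v s)) $ k < (M s *v y s + e *\<^sub>R v' s) $ k"
        if "s \<in> {a<..<b}" for s k
        using v_growth[OF that, of k] \<open>e > \<delta>\<close> \<open>\<delta> \<ge> 0\<close>
        by (simp add: matrix_vector_right_distrib matrix_vector_mult_scaleR)
      show "(y a + e *\<^sub>R v a) $ k > 0" for k
        using y_ge[of k] mult_strict_right_mono[OF \<open>e > \<delta>\<close> v_pos[of k]] by simp
    qed (use that in auto)
    thus ?thesis by simp
  qed
  have below_b: "y s $ i \<ge> - \<delta> * v s $ i" if "s \<in> {a..<b}" for s
  proof (rule tendsto_upperbound)
    show "((\<lambda>e. - e * v s $ i) \<longlongrightarrow> - \<delta> * v s $ i) (at_right \<delta>)"
      by (intro tendsto_intros)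
    show "\<forall>\<^sub>F e in at_right \<delta>. - e * v s $ i \<le> y s $ i"
      using eventually_at_right_less[of \<delta>]
      by (rule eventually_mono) (use strict that in fastforce)
  qed simp
  have "closed {s \<in> {a..b}. - \<delta> * v s $ i \<le> y s $ i}"
    by (intro continuous_on_closed_Collect_le continuous_intros v_cont y_cont)
  hence "closure {a..<b} \<subseteq> {s \<in> {a..b}. - \<delta> * v s $ i \<le> y s $ i}"
    using below_b by (intro closure_minimal) auto
  thus ?thesis using s \<open>a < b\<close> by auto
qed

lemma exists_dwell_interval:
  fixes t T :: real
  assumes "t > 0" "T > 0"
  obtains k :: nat where "real k * T < t" "t \<le> real k * T + T"
proof
  define k where "k = nat (\<lceil>t / T\<rceil> - 1)"
  have k: "real k = real_of_int \<lceil>t / T\<rceil> - 1"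
    using assms by (simp add: k_def one_le_ceiling)
  have "real k < t / T" "t / T \<le> real k + 1"
    using k ceiling_less_cancel le_of_int_ceiling[of "t / T"] by linarith+
  thus "real k * T < t" "t \<le> real k * T + T"
    using assms by (simp_all add: field_simps)
qed

definition impulsive_sol ::
  "(real \<Rightarrow> real^'n^'n) \<Rightarrow> real^'n^'n \<Rightarrow> real \<Rightarrow> (real \<Rightarrow> real^'n) \<Rightarrow> bool" where
  "impulsive_sol M G T x \<longleftrightarrow>
     (\<forall>k::nat. continuous_on {real k * T <.. real k * T + T} x \<and>
        (\<forall>s \<in> {real k * T <..< real k * T + T}.
           (x has_vector_derivative M (s - real k * T) *v x s) (at s)) \<and>
        (x \<longlongrightarrow> (if k = 0 then x 0 else G *v x (real k * T))) (at_right (real k * T)))"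

lemma impulsive_sol_uminus:
  assumes "impulsive_sol M G T x"
  shows "impulsive_sol M G T (\<lambda>t. - x t)"
  unfolding impulsive_sol_def
proof (intro allI)
  fix k :: nat
  show "continuous_on {real k * T<..real k * T + T} (\<lambda>t. - x t) \<and>
    (\<forall>s\<in>{real k * T<..<real k * T + T}.
       ((\<lambda>t. - x t) has_vector_derivative M (s - real k * T) *v - x s) (at s)) \<and>
    ((\<lambda>t. - x t) \<longlongrightarrow> (if k = 0 then - x 0 else G *v - x (real k * T))) (at_right (real k * T))"
    using assms[unfolded impulsive_sol_def, rule_format, of k]
    by (cases "k = 0") (auto intro: continuous_on_minus tendsto_minus simp: vec.neg
        has_vector_derivative_minus)
qed

lemma closed_loop_sol_imp_impulsive_sol:
  assumes "closed_loop_sol A Bc J Bd Kc Kd T x"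
  shows "impulsive_sol (\<lambda>\<tau>. A + Bc ** Kc \<tau>) (J + Bd ** Kd) T x"
  unfolding impulsive_sol_def
proof (intro allI)
  fix k :: nat
  have "real (Suc k) * T = real k * T + T" by (simp add: algebra_simps)
  with assms[unfolded closed_loop_sol_def, rule_format, of k]
  show "continuous_on {real k * T<..real k * T + T} x \<and>
    (\<forall>s\<in>{real k * T<..<real k * T + T}.
       (x has_vector_derivative (A + Bc ** Kc (s - real k * T)) *v x s) (at s)) \<and>
    (x \<longlongrightarrow> (if k = 0 then x 0 else (J + Bd ** Kd) *v x (real k * T))) (at_right (real k * T))"
    by (cases "k = 0") (simp_all add: matrix_vector_mult_add_rdistrib matrix_vector_mul_assoc[symmetric])
qed

lemma exponential_bound_imp_stable:
  fixes P :: "(real \<Rightarrow> 'a::real_normed_vector) \<Rightarrow> bool"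
  assumes "0 \<le> \<rho>" "\<rho> < 1" "K \<ge> 0"
    and bound: "\<And>x t. P x \<Longrightarrow> t > 0 \<Longrightarrow>
                  \<exists>k::nat. t \<le> real k * T + T \<and> norm (x t) \<le> K * \<rho> ^ k * norm (x 0)"
    and "e > 0"
  shows "\<exists>d>0. \<forall>x. P x \<and> norm (x 0) < d \<longrightarrow> (\<forall>t\<ge>0. norm (x t) < e)"
proof (intro exI[of _ "e / (K + 1)"] conjI allI impI)
  fix x and t :: real assume x: "P x \<and> norm (x 0) < e / (K + 1)" and "t \<ge> 0"
  have "norm (x t) \<le> (K + 1) * norm (x 0)"
  proof (cases "t = 0")
    case False
    then obtain k :: nat where "norm (x t) \<le> K * \<rho> ^ k * norm (x 0)"
      using bound[of x t] x \<open>t \<ge> 0\<close> by auto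
    also have "\<dots> \<le> (K + 1) * norm (x 0)"
    proof (intro mult_right_mono)
      have "\<rho> ^ k \<le> 1" using assms(1,2) by (intro power_le_one) auto
      thus "K * \<rho> ^ k \<le> K + 1" using mult_left_mono[of "\<rho> ^ k" 1 K] \<open>K \<ge> 0\<close> by simp
    qed simp
    finally show ?thesis .
  qed (use \<open>K \<ge> 0\<close> in \<open>simp add: distrib_right\<close>)
  also have "\<dots> < e" using x \<open>K \<ge> 0\<close> by (simp add: field_simps)
  finally show "norm (x t) < e" .
qed (use \<open>e > 0\<close> \<open>K \<ge> 0\<close> in simp)

lemma exponential_bound_imp_attractive:
  fixes x :: "real \<Rightarrow> 'a::real_normed_vector"
  assumes "T > 0" "0 \<le> \<rho>" "\<rho> < 1" "K \<ge> 0"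
    and bound: "\<And>t. t > 0 \<Longrightarrow> \<exists>k::nat. t \<le> real k * T + T \<and> norm (x t) \<le> K * \<rho> ^ k * norm (x 0)"
  shows "(x \<longlongrightarrow> 0) at_top"
proof (rule tendstoI)
  fix e :: real assume "e > 0"
  have "(\<lambda>n. K * norm (x 0) * \<rho> ^ n) \<longlonglongrightarrow> 0"
    using assms(2,3) by (intro tendsto_mult_right_zero LIMSEQ_power_zero) auto
  from tendstoD[OF this \<open>e > 0\<close>] obtain N where N: "K * norm (x 0) * \<rho> ^ N < e"
    using assms(2,4) by (auto simp: eventually_sequentially abs_mult)
  have "dist (x t) 0 < e" if t: "t \<ge> real (Suc N) * T" for t
  proof -
    have "real (Suc N) * T > 0" using \<open>T > 0\<close> by simp
    with t have "t > 0" by linarith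
    then obtain k :: nat
      where k: "t \<le> real k * T + T" "norm (x t) \<le> K * \<rho> ^ k * norm (x 0)" using bound by blast
    have "real N * T \<le> real k * T" using t k(1) by (simp add: algebra_simps)
    hence "N \<le> k" using \<open>T > 0\<close> by simp
    hence "\<rho> ^ k \<le> \<rho> ^ N" using assms(2,3) by (intro power_decreasing) auto
    hence "K * \<rho> ^ k * norm (x 0) \<le> K * norm (x 0) * \<rho> ^ N"
      using mult_left_mono[of "\<rho> ^ k" "\<rho> ^ N" "K * norm (x 0)"] \<open>K \<ge> 0\<close> by (simp add: ac_simps)
    thus ?thesis using k(2) N by simp
  qed
  thus "\<forall>\<^sub>F t in at_top. dist (x t) 0 < e"
    unfolding eventually_at_top_linorder by blast
qed

text \<open>\<open>v\<close> is a time-varying linear copositive Lyapunov function for the impulsive system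
  \<open>x' = M(t - kT) x\<close>, \<open>x(kT\<^sup>+) = G x(kT)\<close>, and \<open>\<rho>\<close> bounds its decrease over one period.\<close>

locale copositive_certificate =
  fixes T \<rho> :: real and M :: "real \<Rightarrow> real^'n^'n" and G :: "real^'n^'n"
    and v v' :: "real \<Rightarrow> real^'n"
  assumes T_pos: "T > 0"
    and v_cont: "continuous_on {0..T} v"
    and v_deriv: "\<And>s. s \<in> {0<..<T} \<Longrightarrow> (v has_vector_derivative v' s) (at s)"
    and M_metzler: "\<And>s. s \<in> {0<..<T} \<Longrightarrow> metzler (M s)"
    and v_growth: "\<And>s i. s \<in> {0<..<T} \<Longrightarrow> (M s *v v s) $ i < v' s $ i"
    and v0_pos: "\<And>i. v 0 $ i > 0"
    and G_nonneg: "nonneg_mat G"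
    and G_contracts: "\<And>i. (G *v v T) $ i \<le> \<rho> * v 0 $ i"
    and rho_nonneg: "\<rho> \<ge> 0"
begin

lemma lower_bound_on_interval:
  fixes x :: "real \<Rightarrow> real^'n"
  assumes x_cont: "continuous_on {a<..a+T} x"
    and x_deriv: "\<And>s. s \<in> {a<..<a+T} \<Longrightarrow> (x has_vector_derivative M (s - a) *v x s) (at s)"
    and x_lim: "(x \<longlongrightarrow> L) (at_right a)"
    and "\<delta> \<ge> 0" and L_ge: "\<And>i. L $ i \<ge> - \<delta> * v 0 $ i"
    and s: "s \<in> {a<..a+T}"
  shows "x s $ i \<ge> - \<delta> * v (s - a) $ i"
proof -
  define z where "z s = (if s = a then L else x s)" for s
  have "a < a + T" using T_pos by simp
  have z_deriv: "(z has_vector_derivative M (s - a) *v z s) (at s)" if s: "s \<in> {a<..<a+T}" for s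
  proof -
    have "(z has_vector_derivative M (s - a) *v x s) (at s)"
      by (rule has_vector_derivative_transform_within_open[OF x_deriv[OF s] open_greaterThanLessThan s])
         (simp add: z_def)
    thus ?thesis using s by (simp add: z_def)
  qed
  have z_cont: "continuous_on {a..a+T} z"
  proof (rule continuous_on_IccI[OF _ _ _ \<open>a < a + T\<close>])
    have "\<forall>\<^sub>F s in at_right a. x s = z s"
      by (rule eventually_mono[OF eventually_at_right_less]) (simp add: z_def)
    with x_lim show "(z \<longlongrightarrow> z a) (at_right a)"
      unfolding z_def[of a] by (auto intro: Lim_transform_eventually)
    have "(x \<longlongrightarrow> x (a + T)) (at_left (a + T))"
      by (rule continuous_on_Icc_at_leftD[of "a + T / 2", OF continuous_on_subset[OF x_cont]])
         (use T_pos in auto)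
    moreover have "\<forall>\<^sub>F s in at_left (a + T). x s = z s"
      by (rule eventually_mono[OF eventually_at_left_real[OF \<open>a < a + T\<close>]]) (simp add: z_def)
    ultimately show "(z \<longlongrightarrow> z (a + T)) (at_left (a + T))"
      using T_pos unfolding z_def[of "a + T"] by (auto intro: Lim_transform_eventually)
    show "(z \<longlongrightarrow> z s) (at s)" if "a < s" "s < a + T" for s
      using has_vector_derivative_continuous[OF z_deriv] that by (simp add: isCont_def)
  qed
  have v_shift_deriv: "((\<lambda>s. v (s - a)) has_vector_derivative v' (s - a)) (at s)"
    if "s \<in> {a<..<a+T}" for s
  proof -
    have "((\<lambda>s. s - a) has_vector_derivative 1) (at s)"
      by (auto intro!: derivative_eq_intros)
    from vector_diff_chain_at[OF this v_deriv] that show ?thesis by (simp add: o_def)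
  qed
  have "z s $ i \<ge> - \<delta> * v (s - a) $ i"
  proof (rule metzler_comparison[OF \<open>a < a + T\<close> z_cont _ z_deriv v_shift_deriv])
    show "continuous_on {a..a+T} (\<lambda>s. v (s - a))"
      by (rule continuous_on_compose2[OF v_cont]) (auto intro!: continuous_intros)
  qed (use s M_metzler v_growth v0_pos \<open>\<delta> \<ge> 0\<close> L_ge in \<open>auto simp: z_def\<close>)
  thus ?thesis using s by (simp add: z_def)
qed

lemma impulsive_sol_lower_bound:
  assumes sol: "impulsive_sol M G T x" and "c \<ge> 0" and x0_ge: "\<And>i. x 0 $ i \<ge> - c * v 0 $ i"
    and s: "s \<in> {real k * T<..real k * T + T}"
  shows "x s $ i \<ge> - (\<rho> ^ k * c) * v (s - real k * T) $ i"
proof -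
  define L where "L k = (if k = 0 then x 0 else G *v x (real k * T))" for k
  have on_piece: "x s $ i \<ge> - (\<rho> ^ k * c) * v (s - real k * T) $ i"
    if "\<And>i. L k $ i \<ge> - (\<rho> ^ k * c) * v 0 $ i" "s \<in> {real k * T<..real k * T + T}" for k s i
    using sol[unfolded impulsive_sol_def, rule_format, of k] that rho_nonneg \<open>c \<ge> 0\<close>
    by (intro lower_bound_on_interval[where L = "L k"]) (auto simp: L_def)
  have "L k $ i \<ge> - (\<rho> ^ k * c) * v 0 $ i" for k i
  proof (induction k arbitrary: i)
    case 0
    show ?case using x0_ge by (simp add: L_def)
  next
    case (Suc k)
    have "(- (\<rho> ^ k * c) *\<^sub>R v T) $ j \<le> x (real (Suc k) * T) $ j" for j
      using on_piece[OF Suc.IH, of "real k * T + T" j] T_pos by (simp add: algebra_simps)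
    hence "(G *v (- (\<rho> ^ k * c) *\<^sub>R v T)) $ i \<le> L (Suc k) $ i"
      unfolding L_def by (simp add: nonneg_mat_vector_mult_mono[OF G_nonneg])
    moreover have "- (\<rho> ^ Suc k * c) * v 0 $ i \<le> (G *v (- (\<rho> ^ k * c) *\<^sub>R v T)) $ i"
      using mult_left_mono[OF G_contracts[of i], of "\<rho> ^ k * c"] rho_nonneg \<open>c \<ge> 0\<close>
      by (simp add: vec.neg matrix_vector_mult_scaleR algebra_simps)
    ultimately show ?case by simp
  qed
  thus ?thesis using on_piece s by blast
qed

lemma impulsive_sol_abs_bound:
  assumes sol: "impulsive_sol M G T x" and "c \<ge> 0" and "\<And>i. \<bar>x 0 $ i\<bar> \<le> c * v 0 $ i"
    and s: "s \<in> {real k * T<..real k * T + T}"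
  shows "\<bar>x s $ i\<bar> \<le> \<rho> ^ k * c * v (s - real k * T) $ i"
proof -
  have "x s $ i \<ge> - (\<rho> ^ k * c) * v (s - real k * T) $ i"
    using assms by (intro impulsive_sol_lower_bound[OF sol]) (auto simp: abs_le_iff minus_le_iff)
  moreover have "- x s $ i \<ge> - (\<rho> ^ k * c) * v (s - real k * T) $ i"
    using impulsive_sol_lower_bound[OF impulsive_sol_uminus[OF sol]] assms
    by (simp add: abs_le_iff)
  ultimately show ?thesis by (simp add: abs_le_iff)
qed

lemma impulsive_sol_nonneg:
  assumes sol: "impulsive_sol M G T x" and "nonneg_vec (x 0)" and "t \<ge> 0"
  shows "nonneg_vec (x t)"
proof (cases "t = 0")
  case False
  then obtain k :: nat where "t \<in> {real k * T<..real k * T + T}"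
    using exists_dwell_interval[of t T] \<open>t \<ge> 0\<close> T_pos by auto
  thus ?thesis
    using impulsive_sol_lower_bound[OF sol order_refl, of t k] \<open>nonneg_vec (x 0)\<close>
    by (simp add: nonneg_vec_def)
qed (use \<open>nonneg_vec (x 0)\<close> in simp)

lemma impulsive_sol_norm_bound:
  assumes sol: "impulsive_sol M G T x" and "c \<ge> 0" and x0_le: "\<And>i. \<bar>x 0 $ i\<bar> \<le> c * v 0 $ i"
    and v_le: "\<And>s i. s \<in> {0..T} \<Longrightarrow> v s $ i \<le> B"
    and t: "t \<in> {real k * T<..real k * T + T}"
  shows "norm (x t) \<le> real CARD('n) * (\<rho> ^ k * c * B)"
proof -
  have "\<bar>x t $ i\<bar> \<le> \<rho> ^ k * c * B" for i
  proof -
    have "\<bar>x t $ i\<bar> \<le> \<rho> ^ k * c * v (t - real k * T) $ i"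
      by (rule impulsive_sol_abs_bound[OF sol \<open>c \<ge> 0\<close> x0_le t])
    also have "\<dots> \<le> \<rho> ^ k * c * B"
      using t rho_nonneg \<open>c \<ge> 0\<close> by (intro mult_left_mono v_le) auto
    finally show ?thesis .
  qed
  hence "(\<Sum>i\<in>UNIV. \<bar>x t $ i\<bar>) \<le> real CARD('n) * (\<rho> ^ k * c * B)"
    using sum_mono[of UNIV "\<lambda>i. \<bar>x t $ i\<bar>" "\<lambda>_. \<rho> ^ k * c * B"] by simp
  with norm_le_l1_cart show ?thesis by (rule order_trans)
qed

lemma impulsive_sol_exponential_bound:
  obtains K where "K \<ge> 0"
    and "\<And>x t. impulsive_sol M G T x \<Longrightarrow> t > 0 \<Longrightarrow>
           \<exists>k::nat. t \<le> real k * T + T \<and> norm (x t) \<le> K * \<rho> ^ k * norm (x 0)"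
proof -
  define \<mu> where "\<mu> = Min (range (\<lambda>i. v 0 $ i))"
  have \<mu>_le: "\<mu> \<le> v 0 $ i" for i unfolding \<mu>_def by (rule Min_le) auto
  have "\<mu> \<in> range (\<lambda>i. v 0 $ i)" unfolding \<mu>_def by (rule Min_in) auto
  hence "\<mu> > 0" using v0_pos by auto
  obtain B where B: "\<And>s. s \<in> {0..T} \<Longrightarrow> norm (v s) \<le> B"
    using compact_imp_bounded[OF compact_continuous_image[OF v_cont compact_Icc]]
    unfolding bounded_iff by fastforce
  have v_le: "v s $ i \<le> B" if "s \<in> {0..T}" for s i
    using component_le_norm_cart[of "v s" i] B[OF that] by linarith
  have "B \<ge> 0" using less_le_trans[OF v0_pos v_le[of 0]] T_pos by (simp add: less_imp_le)
  define K where "K = real CARD('n) * B / \<mu>"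
  have bound: "\<exists>k::nat. t \<le> real k * T + T \<and> norm (x t) \<le> K * \<rho> ^ k * norm (x 0)"
    if sol: "impulsive_sol M G T x" and "t > 0" for x t
  proof -
    obtain k :: nat where t: "t \<in> {real k * T<..real k * T + T}"
      using exists_dwell_interval[of t T] \<open>t > 0\<close> T_pos by auto
    define c where "c = norm (x 0) / \<mu>"
    have "c \<ge> 0" using \<open>\<mu> > 0\<close> by (simp add: c_def)
    have "\<bar>x 0 $ i\<bar> \<le> c * v 0 $ i" for i
      using component_le_norm_cart[of "x 0" i] mult_left_mono[OF \<mu>_le[of i] \<open>c \<ge> 0\<close>] \<open>\<mu> > 0\<close>
      by (simp add: c_def)
    from impulsive_sol_norm_bound[OF sol \<open>c \<ge> 0\<close> this v_le t]
    have "norm (x t) \<le> K * \<rho> ^ k * norm (x 0)" by (simp add: K_def c_def ac_simps)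
    thus ?thesis using t by auto
  qed
  show ?thesis
    using that[OF _ bound] \<open>B \<ge> 0\<close> \<open>\<mu> > 0\<close> by (simp add: K_def)
qed

lemma fundamental_matrix_bound:
  fixes \<Psi> :: "real \<Rightarrow> real^'n^'n"
  assumes "\<Psi> 0 = mat 1"
    and \<Psi>_deriv: "\<And>s. s \<in> {0..T} \<Longrightarrow> (\<Psi> has_vector_derivative M s ** \<Psi> s) (at s within {0..T})"
  shows "(\<Psi> T *v v 0) $ i \<le> v T $ i"
proof -
  define y where "y s = - (\<Psi> s *v v 0)" for s
  have y_deriv: "(y has_vector_derivative M s *v y s) (at s within {0..T})" if "s \<in> {0..T}" for s
    unfolding y_def using has_vector_derivative_matrix_vector_mult_left[OF \<Psi>_deriv[OF that]]
    by (auto intro!: derivative_eq_intros simp: vec.neg matrix_vector_mul_assoc)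
  have "- 1 * v T $ i \<le> y T $ i"
  proof (rule metzler_comparison[OF T_pos continuous_on_vector_derivative[OF y_deriv] v_cont])
    show "(y has_vector_derivative M s *v y s) (at s)" if "s \<in> {0<..<T}" for s
      using y_deriv[of s] that by (simp add: at_within_Icc_at)
  qed (use assms T_pos v_deriv M_metzler v_growth v0_pos in \<open>auto simp: y_def\<close>)
  thus ?thesis by (simp add: y_def)
qed

lemma monodromy_decreases:
  fixes \<Psi> :: "real \<Rightarrow> real^'n^'n"
  assumes "\<rho> < 1" and "\<Psi> 0 = mat 1"
    and "\<And>s. s \<in> {0..T} \<Longrightarrow> (\<Psi> has_vector_derivative M s ** \<Psi> s) (at s within {0..T})"
  shows "((G ** \<Psi> T - mat 1) *v v 0) $ i < 0"
proof -
  have "(G *v (\<Psi> T *v v 0)) $ i \<le> (G *v v T) $ i"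
    using fundamental_matrix_bound[OF assms(2,3)] by (rule nonneg_mat_vector_mult_mono[OF G_nonneg])
  also have "\<dots> < v 0 $ i"
    using G_contracts[of i] mult_strict_right_mono[OF \<open>\<rho> < 1\<close> v0_pos[of i]] by simp
  finally show ?thesis
    by (simp add: matrix_vector_mul_assoc[symmetric] matrix_vector_mult_diff_rdistrib)
qed

end

lemma matrix_add_rdistrib: "((A::'a::semiring_1^'n^'m) + B) ** C = A ** C + B ** C"
  by (vector matrix_matrix_mult_def sum.distrib[symmetric] field_simps)

lemma matrix_inv_mult_left:
  fixes X :: "real^'n^'n"
  assumes "invertible X"
  shows "matrix_inv X ** X = mat 1"
proof -
  have "\<exists>Y. X ** Y = mat 1 \<and> Y ** X = mat 1" using assms by (simp add: invertible_def)
  from someI_ex[OF this] show ?thesis by (simp add: matrix_inv_def)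
qed

lemma diag_mat_mult_right_nth:
  assumes "diag_mat D"
  shows "(N ** D) $ i $ j = N $ i $ j * D $ j $ j"
proof -
  have "(N ** D) $ i $ j = (\<Sum>k\<in>UNIV. if k = j then N $ i $ j * D $ j $ j else 0)"
    unfolding matrix_matrix_mult_def vec_lambda_beta
    by (rule sum.cong) (use assms in \<open>auto simp: diag_mat_def\<close>)
  thus ?thesis by simp
qed

lemma diag_mat_mult_ones:
  assumes "diag_mat X"
  shows "(X *v ones) $ i = X $ i $ i"
proof -
  have "(X *v ones) $ i = (\<Sum>k\<in>UNIV. if k = i then X $ i $ i else 0)"
    unfolding matrix_vector_mult_def ones_def vec_lambda_beta
    by (rule sum.cong) (use assms in \<open>auto simp: diag_mat_def\<close>)
  thus ?thesis by simp
qed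

lemma diag_mat_invertible_nonzero:
  fixes X :: "real^'n^'n"
  assumes "diag_mat X" "invertible X"
  shows "X $ i $ i \<noteq> 0"
  using diag_mat_mult_right_nth[OF assms(1), of "matrix_inv X" i i] matrix_inv_mult_left[OF assms(2)]
  by (auto simp: mat_def)

lemma diag_mat_right_cancel_nth:
  assumes "diag_mat X" "X $ j $ j \<noteq> 0" "P ** X = Q"
  shows "P $ i $ j = Q $ i $ j / X $ j $ j"
  using diag_mat_mult_right_nth[OF assms(1), of P i j] assms(2,3) by simp

lemma feedback_mult_eq:
  fixes X :: "real^'n^'n"
  assumes "invertible X"
  shows "(A + B ** (U ** matrix_inv X)) ** X = A ** X + B ** U"
  by (simp add: matrix_add_rdistrib matrix_mul_assoc[symmetric] matrix_inv_mult_left[OF assms])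

lemma feedback_nth:
  fixes X :: "real^'n^'n"
  assumes "diag_mat X" "invertible X"
  shows "(A + B ** (U ** matrix_inv X)) $ i $ j = (A ** X + B ** U) $ i $ j / X $ j $ j"
  using diag_mat_invertible_nonzero[OF assms] feedback_mult_eq[OF assms(2)]
  by (rule diag_mat_right_cancel_nth[OF assms(1)])

lemma metzler_feedback:
  fixes X :: "real^'n^'n"
  assumes "diag_mat X" "invertible X" "\<And>j. X $ j $ j > 0"
    and "nonneg_mat (A ** X + B ** U + \<alpha> *\<^sub>R mat 1)"
  shows "metzler (A + B ** (U ** matrix_inv X))"
  unfolding metzler_def
proof (intro allI impI)
  fix i j :: 'n assume "i \<noteq> j"
  hence "(A ** X + B ** U) $ i $ j \<ge> 0"
    using assms(4)[unfolded nonneg_mat_def, rule_format, of i j] by (simp add: mat_def)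
  thus "(A + B ** (U ** matrix_inv X)) $ i $ j \<ge> 0"
    unfolding feedback_nth[OF assms(1,2)] using assms(3) by (simp add: less_imp_le)
qed

lemma nonneg_feedback:
  fixes X :: "real^'n^'n"
  assumes "diag_mat X" "invertible X" "\<And>j. X $ j $ j > 0" "nonneg_mat (A ** X + B ** U)"
  shows "nonneg_mat (A + B ** (U ** matrix_inv X))"
  using assms(3,4) unfolding nonneg_mat_def feedback_nth[OF assms(1,2)] by (simp add: less_imp_le)

lemma diag_mat_pos_on_interval:
  fixes X :: "real \<Rightarrow> real^'n^'n"
  assumes X_cont: "continuous_on {a..b} X"
    and X_diag: "\<And>\<tau>. \<tau> \<in> {a..b} \<Longrightarrow> diag_mat (X \<tau>)"
    and X_nonsing: "\<And>\<tau>. \<tau> \<in> {a..b} \<Longrightarrow> invertible (X \<tau>)"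
    and "X a $ i $ i > 0" and \<tau>: "\<tau> \<in> {a..b}"
  shows "X \<tau> $ i $ i > 0"
proof (rule ccontr)
  assume "\<not> X \<tau> $ i $ i > 0"
  moreover have "continuous_on {a..\<tau>} (\<lambda>t. X t $ i $ i)"
    using \<tau> by (intro continuous_intros continuous_on_subset[OF X_cont]) auto
  ultimately obtain s where "s \<in> {a..\<tau>}" "X s $ i $ i = 0"
    using IVT2'[of "\<lambda>t. X t $ i $ i" \<tau> 0 a] \<open>X a $ i $ i > 0\<close> \<tau> by force
  thus False using diag_mat_invertible_nonzero[OF X_diag X_nonsing] \<tau> by auto
qed

lemma exists_contraction_factor:
  fixes w u :: "real^'n"
  assumes u_pos: "\<And>i. u $ i > 0" and "\<epsilon> > 0" and w_le: "\<And>i. w $ i \<le> u $ i - \<epsilon>"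
  obtains \<rho> where "0 \<le> \<rho>" "\<rho> < 1" "\<And>i. w $ i \<le> \<rho> * u $ i"
proof -
  define S where "S = (\<Sum>i\<in>UNIV. u $ i)"
  have u_le: "u $ i \<le> S" for i
    unfolding S_def by (rule member_le_sum) (use u_pos in \<open>auto intro: less_imp_le\<close>)
  hence "S > 0" using u_pos less_le_trans by blast
  show ?thesis
  proof (rule that[of "max 0 (1 - \<epsilon> / S)"])
    show "max 0 (1 - \<epsilon> / S) < 1" using \<open>S > 0\<close> \<open>\<epsilon> > 0\<close> by simp
    fix i
    have "\<epsilon> * u $ i / S \<le> \<epsilon>" using u_le[of i] \<open>S > 0\<close> \<open>\<epsilon> > 0\<close> by (simp add: divide_le_eq)
    hence "u $ i - \<epsilon> \<le> (1 - \<epsilon> / S) * u $ i" by (simp add: algebra_simps)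
    also have "\<dots> \<le> max 0 (1 - \<epsilon> / S) * u $ i" using u_pos[of i] by (intro mult_right_mono) auto
    finally show "w $ i \<le> max 0 (1 - \<epsilon> / S) * u $ i" using w_le[of i] by linarith
  qed simp
qed

lemma lmi_copositive_certificate:
  fixes A :: "real^'n^'n" and B :: "real^'m^'n" and G :: "real^'n^'n"
    and X X' :: "real \<Rightarrow> real^'n^'n" and U :: "real \<Rightarrow> real^'n^'m"
  assumes "T > 0"
    and X_deriv: "\<And>\<tau>. \<tau> \<in> {0..T} \<Longrightarrow> (X has_vector_derivative X' \<tau>) (at \<tau> within {0..T})"
    and X_diag: "\<And>\<tau>. \<tau> \<in> {0..T} \<Longrightarrow> diag_mat (X \<tau>)"
    and X_nonsing: "\<And>\<tau>. \<tau> \<in> {0..T} \<Longrightarrow> invertible (X \<tau>)"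
    and X_pos: "\<And>\<tau> i. \<tau> \<in> {0..T} \<Longrightarrow> X \<tau> $ i $ i > 0"
    and metzler: "\<And>\<tau>. \<tau> \<in> {0..T} \<Longrightarrow> metzler (A + B ** (U \<tau> ** matrix_inv (X \<tau>)))"
    and decay: "\<And>\<tau> i. \<tau> \<in> {0..T} \<Longrightarrow> ((- X' \<tau> + A ** X \<tau> + B ** U \<tau>) *v ones) $ i < 0"
    and "nonneg_mat G" and "\<And>i. ((G ** X T) *v ones) $ i \<le> \<rho> * (X 0 *v ones) $ i"
    and "\<rho> \<ge> 0"
  shows "copositive_certificate T \<rho> (\<lambda>\<tau>. A + B ** (U \<tau> ** matrix_inv (X \<tau>))) G
           (\<lambda>\<tau>. X \<tau> *v ones) (\<lambda>\<tau>. X' \<tau> *v ones)"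
proof
  have v_deriv: "((\<lambda>\<tau>. X \<tau> *v ones) has_vector_derivative X' \<tau> *v ones) (at \<tau> within {0..T})"
    if "\<tau> \<in> {0..T}" for \<tau>
    by (rule has_vector_derivative_matrix_vector_mult_left[OF X_deriv[OF that]])
  thus "continuous_on {0..T} (\<lambda>\<tau>. X \<tau> *v ones)" by (rule continuous_on_vector_derivative)
  show "((\<lambda>\<tau>. X \<tau> *v ones) has_vector_derivative X' s *v ones) (at s)" if "s \<in> {0<..<T}" for s
    using v_deriv[of s] that by (simp add: at_within_Icc_at)
  fix s i
  show "(X 0 *v ones) $ i > 0"
    using X_pos[of 0] diag_mat_mult_ones[OF X_diag] \<open>T > 0\<close> by simp
  assume "s \<in> {0<..<T}"
  hence s: "s \<in> {0..T}" by simp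
  show "metzler (A + B ** (U s ** matrix_inv (X s)))" by (rule metzler[OF s])
  have "(A + B ** (U s ** matrix_inv (X s))) *v (X s *v ones) = (A ** X s + B ** U s) *v ones"
    by (simp add: matrix_vector_mul_assoc feedback_mult_eq[OF X_nonsing[OF s]])
  moreover have "- X' s + A ** X s + B ** U s = (A ** X s + B ** U s) - X' s" by simp
  ultimately show "((A + B ** (U s ** matrix_inv (X s))) *v (X s *v ones)) $ i < (X' s *v ones) $ i"
    using decay[OF s, of i] by (simp only: matrix_vector_mult_diff_rdistrib) simp
qed (use assms in \<open>simp_all add: matrix_vector_mul_assoc\<close>)

lemma closed_loop_positive_if_certificate:
  assumes "copositive_certificate T \<rho> (\<lambda>\<tau>. A + Bc ** Kc \<tau>) (J + Bd ** Kd) v v'"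
  shows "closed_loop_positive A Bc J Bd Kc Kd T"
  unfolding closed_loop_positive_def
  using copositive_certificate.impulsive_sol_nonneg[OF assms] closed_loop_sol_imp_impulsive_sol by blast

lemma closed_loop_GAS_if_certificate:
  assumes cert: "copositive_certificate T \<rho> (\<lambda>\<tau>. A + Bc ** Kc \<tau>) (J + Bd ** Kd) v v'" and "\<rho> < 1"
  shows "closed_loop_GAS A Bc J Bd Kc Kd T"
proof -
  interpret copositive_certificate T \<rho> "\<lambda>\<tau>. A + Bc ** Kc \<tau>" "J + Bd ** Kd" v v' by (fact cert)
  obtain K where "K \<ge> 0" and bound: "\<And>x t. impulsive_sol (\<lambda>\<tau>. A + Bc ** Kc \<tau>) (J + Bd ** Kd) T x \<Longrightarrow>
      t > 0 \<Longrightarrow> \<exists>k::nat. t \<le> real k * T + T \<and> norm (x t) \<le> K * \<rho> ^ k * norm (x 0)"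
    using impulsive_sol_exponential_bound by blast
  show ?thesis
    unfolding closed_loop_GAS_def
  proof (intro conjI allI impI)
    show "\<exists>d>0. \<forall>x. closed_loop_sol A Bc J Bd Kc Kd T x \<and> norm (x 0) < d \<longrightarrow> (\<forall>t\<ge>0. norm (x t) < e)"
      if "e > 0" for e
      using exponential_bound_imp_stable[OF rho_nonneg \<open>\<rho> < 1\<close> \<open>K \<ge> 0\<close>
          bound[OF closed_loop_sol_imp_impulsive_sol] that] .
    show "(x \<longlongrightarrow> 0) at_top" if "closed_loop_sol A Bc J Bd Kc Kd T x" for x
      using exponential_bound_imp_attractive[OF T_pos rho_nonneg \<open>\<rho> < 1\<close> \<open>K \<ge> 0\<close>
          bound[OF closed_loop_sol_imp_impulsive_sol[OF that]]] .
  qed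
qed

theorem theorem7:
  fixes A J :: "real ^ 'n ^ 'n"
    and Bc :: "real ^ 'mc ^ 'n"
    and Bd :: "real ^ 'md ^ 'n"
    and T :: real
    and X X' :: "real \<Rightarrow> real ^ 'n ^ 'n"
    and U :: "real \<Rightarrow> real ^ 'n ^ 'mc"
    and Ud :: "real ^ 'n ^ 'md"
    and \<epsilon> \<alpha> :: real
  assumes T_pos: "T > 0"
    and X_deriv: "\<And>\<tau>. \<tau> \<in> {0..T} \<Longrightarrow> (X has_vector_derivative X' \<tau>) (at \<tau> within {0..T})"
    and X'_cont: "continuous_on {0..T} X'"
    and X_diag: "\<And>\<tau>. \<tau> \<in> {0..T} \<Longrightarrow> diag_mat (X \<tau>)"
    and X_nonsing: "\<And>\<tau>. \<tau> \<in> {0..T} \<Longrightarrow> invertible (X \<tau>)"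
    and X0_pos: "pos_diag_mat (X 0)"
    and U_cont: "continuous_on {0..T} U"
    and eps_pos: "\<epsilon> > 0"
    and alpha_pos: "\<alpha> > 0"
    and C1: "\<And>\<tau>. \<tau> \<in> {0..T} \<Longrightarrow> nonneg_mat (A ** X \<tau> + Bc ** U \<tau> + \<alpha> *\<^sub>R mat 1)"
    and C2: "nonneg_mat (J ** X T + Bd ** Ud)"
    and C3: "\<And>\<tau> i. \<tau> \<in> {0..T} \<Longrightarrow> ((- X' \<tau> + A ** X \<tau> + Bc ** U \<tau>) *v ones) $ i < 0"
    and C4: "\<And>i. ((J ** X T + Bd ** Ud - X 0 + \<epsilon> *\<^sub>R mat 1) *v ones) $ i \<le> 0"
  defines "Kc \<equiv> (\<lambda>\<tau>. U \<tau> ** matrix_inv (X \<tau>))"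
    and "Kd \<equiv> Ud ** matrix_inv (X T)"
  shows "(\<forall>\<tau>\<in>{0..T}. metzler (A + Bc ** Kc \<tau>))
       \<and> nonneg_mat (J + Bd ** Kd)
       \<and> (\<forall>\<Psi> :: real \<Rightarrow> real ^ 'n ^ 'n.
            \<Psi> 0 = mat 1 \<and>
            (\<forall>s\<in>{0..T}. (\<Psi> has_vector_derivative ((A + Bc ** Kc s) ** \<Psi> s)) (at s within {0..T}))
            \<longrightarrow> (\<forall>i. ((((J + Bd ** Kd) ** \<Psi> T - mat 1) ** X 0) *v ones) $ i < 0))
       \<and> closed_loop_positive A Bc J Bd Kc Kd T
       \<and> closed_loop_GAS A Bc J Bd Kc Kd T"
proof -
  have T_in: "0 \<in> {0..T}" "T \<in> {0..T}" using T_pos by auto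
  have X_pos: "X \<tau> $ i $ i > 0" if "\<tau> \<in> {0..T}" for \<tau> i
  proof (rule diag_mat_pos_on_interval[OF _ X_diag X_nonsing])
    show "continuous_on {0..T} X" by (rule continuous_on_vector_derivative[OF X_deriv])
  qed (use X0_pos that in \<open>auto simp: pos_diag_mat_def\<close>)
  have metzler: "metzler (A + Bc ** Kc \<tau>)" if "\<tau> \<in> {0..T}" for \<tau>
    unfolding Kc_def by (rule metzler_feedback[OF X_diag X_nonsing _ C1]) (use X_pos that in auto)
  have G_nonneg: "nonneg_mat (J + Bd ** Kd)"
    unfolding Kd_def by (rule nonneg_feedback[OF X_diag X_nonsing _ C2]) (use X_pos T_in in auto)
  have "(X 0 *v ones) $ i > 0" for i
    using X_pos[OF T_in(1)] diag_mat_mult_ones[OF X_diag[OF T_in(1)]] by simp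
  moreover have "((J ** X T + Bd ** Ud) *v ones) $ i \<le> (X 0 *v ones) $ i - \<epsilon>" for i
    using C4[of i] by (simp add: matrix_vector_mult_add_rdistrib matrix_vector_mult_diff_rdistrib
        scaleR_matrix_vector_assoc[symmetric] ones_def)
  ultimately obtain \<rho> where
    \<rho>: "0 \<le> \<rho>" "\<rho> < 1" "\<And>i. ((J ** X T + Bd ** Ud) *v ones) $ i \<le> \<rho> * (X 0 *v ones) $ i"
    using exists_contraction_factor[OF _ eps_pos] by blast
  have cert: "copositive_certificate T \<rho> (\<lambda>\<tau>. A + Bc ** Kc \<tau>) (J + Bd ** Kd)
      (\<lambda>\<tau>. X \<tau> *v ones) (\<lambda>\<tau>. X' \<tau> *v ones)"
    unfolding Kc_def
  proof (rule lmi_copositive_certificate[OF T_pos X_deriv X_diag X_nonsing X_pos _ C3 G_nonneg _ \<rho>(1)])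
    show "((J + Bd ** Kd) ** X T *v ones) $ i \<le> \<rho> * (X 0 *v ones) $ i" for i
      using \<rho>(3) unfolding Kd_def feedback_mult_eq[OF X_nonsing[OF T_in(2)]] .
  qed (use metzler in \<open>auto simp: Kc_def\<close>)
  show ?thesis
    using metzler G_nonneg copositive_certificate.monodromy_decreases[OF cert \<rho>(2)]
      closed_loop_positive_if_certificate[OF cert] closed_loop_GAS_if_certificate[OF cert \<rho>(2)]
    by (simp add: matrix_vector_mul_assoc[symmetric])
qed

end
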